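(* Let $a,b,c,p,\lambda,n$ be real constants with $3a=pb$, $c\lambda=0$ and $(1+p/3)\lambda=2-n$, and set $\tilde\lambda=1-\frac{n+\lambda}{2}$ and $$\tilde L=\tfrac12(ru_r-\lambda u)u_t^2-\tfrac16(ru_r-3\lambda u)(c+bu^p)u_r^2 .$$ Then, identically (for every smooth positive function $u(t,r)$, $r>0$), $$r^{n-1}(ru_r-\lambda u)\Big(u_{tt}-(c+bu^p)\big(u_{rr}+\tfrac{n-1}{r}u_r\big)-\tfrac{pb}{3}u^{p-1}u_r^2\Big)=-E_u\big(r^{n-1}\tilde L\big)-(rD_r+\tilde\lambda)\big(r^{n-1}u_t^2\big),$$ where $E_u=\partial_u-D_r\partial_{u_r}-D_t\partial_{u_t}$ is the Euler–Lagrange operator. Moreover, if in addition $c=0$, $p=6(1-3/n)$ and $\lambda=-n/3$, then multiplying this identity by $u_t$ yields a conservation law $D_tT+D_rX=0$ of equation (A) with $a=pb/3$, whose multiplier is $r^{n-1}u_t(ru_r+\tfrac n3u)$.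
   Context: Equation (A) with $a=pb/3$ is $u_{tt}=(c+bu^{p})\big(u_{rr}+\frac{n-1}{r}u_{r}\big)+\tfrac{pb}{3}u^{p-1}u_{r}^{2}$. $D_t,D_r$ denote total derivatives. *)

theory Defs
  imports "HOL-Analysis.Analysis"
begin

definition pt :: "(real \<Rightarrow> real \<Rightarrow> real) \<Rightarrow> real \<Rightarrow> real \<Rightarrow> real" where
  "pt u t r = deriv (\<lambda>s. u s r) t"

definition pr :: "(real \<Rightarrow> real \<Rightarrow> real) \<Rightarrow> real \<Rightarrow> real \<Rightarrow> real" where
  "pr u t r = deriv (\<lambda>s. u t s) r"

fun Ck :: "nat \<Rightarrow> (real \<times> real) set \<Rightarrow> (real \<Rightarrow> real \<Rightarrow> real) \<Rightarrow> bool" where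
  "Ck 0 S u = continuous_on S (case_prod u)"
| "Ck (Suc k) S u = ((\<forall>z\<in>S. case_prod u differentiable (at z))
                      \<and> Ck k S (pt u) \<and> Ck k S (pr u))"

definition smooth_on :: "(real \<times> real) set \<Rightarrow> (real \<Rightarrow> real \<Rightarrow> real) \<Rightarrow> bool" where
  "smooth_on S u \<longleftrightarrow> (\<forall>k. Ck k S u)"

text \<open>Euler--Lagrange operator E_u = d_u - D_r d_{u_r} - D_t d_{u_t} applied to a
  Lagrangian F(r,u,u_r,u_t), evaluated along u at (t,r).\<close>

definition EL :: "(real \<Rightarrow> real \<Rightarrow> real \<Rightarrow> real \<Rightarrow> real) \<Rightarrow> (real \<Rightarrow> real \<Rightarrow> real)
                   \<Rightarrow> real \<Rightarrow> real \<Rightarrow> real" where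
  "EL F u t r =
     deriv (\<lambda>V. F r V (pr u t r) (pt u t r)) (u t r)
   - deriv (\<lambda>s. deriv (\<lambda>W. F s (u t s) W (pt u t s)) (pr u t s)) r
   - deriv (\<lambda>s. deriv (\<lambda>W. F r (u s r) (pr u s r) W) (pt u s r)) t"

definition Lag :: "real \<Rightarrow> real \<Rightarrow> real \<Rightarrow> real \<Rightarrow> real \<Rightarrow> real
                    \<Rightarrow> real \<Rightarrow> real \<Rightarrow> real \<Rightarrow> real" where
  "Lag b c p lam n r U Ur Ut =
     r powr (n - 1) * ((1/2) * (r * Ur - lam * U) * Ut^2
                       - (1/6) * (r * Ur - 3 * lam * U) * (c + b * U powr p) * Ur^2)"

text \<open>Residual of equation (A) with a = p b / 3.\<close>

definition resA :: "real \<Rightarrow> real \<Rightarrow> real \<Rightarrow> real \<Rightarrow> (real \<Rightarrow> real \<Rightarrow> real) \<Rightarrow> real \<Rightarrow> real \<Rightarrow> real" where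
  "resA b c p n u t r =
     pt (pt u) t r - (c + b * u t r powr p) * (pr (pr u) t r + (n - 1) / r * pr u t r)
     - (p * b / 3) * u t r powr (p - 1) * (pr u t r)^2"

end

theory Submission
  imports Defs
begin

text \<open>
  The proof
  reduces them to polynomial identities in the jet \<open>(u, u\<^sub>r, u\<^sub>t, u\<^sub>r\<^sub>r, u\<^sub>r\<^sub>t, u\<^sub>t\<^sub>t)\<close> of \<open>u\<close> at
  a point \<open>(t, r)\<close>, \<open>r > 0\<close>:
  \<^item> the partial derivatives \<open>pt\<close>, \<open>pr\<close> of a differentiable function are derivatives of
    its sections, and for \<open>C\<^sup>2\<close> functions the mixed partials commute (Schwarz--Clairaut,
    via the mean value theorem for second differences);
  \<^item> hence every total derivative \<open>D\<^sub>t\<close>, \<open>D\<^sub>r\<close> of an expression in \<open>(r, u, u\<^sub>r, u\<^sub>t)\<close>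
    is computed by the chain rule in terms of the jet;
  \<^item> this evaluates the Euler--Lagrange expression of the Lagrangian and the total
    derivatives of the conserved density and flux, after which both identities are
    field-algebra computations using the parameter constraints.
\<close>

lemma pt_has_real_derivative:
  assumes "case_prod f differentiable (at (x, y))"
  shows "((\<lambda>s. f s y) has_real_derivative pt f x y) (at x)"
proof -
  have "((\<lambda>s. (s, y)) has_derivative (\<lambda>h. (h, 0))) (at x)"
    by (auto intro!: derivative_eq_intros)
  then have "(case_prod f \<circ> (\<lambda>s. (s, y))) differentiable (at x)"
    using differentiable_chain_at assms differentiableI by blast
  then show ?thesis
    by (simp add: o_def pt_def DERIV_deriv_iff_real_differentiable)
qed

lemma pr_has_real_derivative:
  assumes "case_prod f differentiable (at (x, y))"
  shows "((\<lambda>s. f x s) has_real_derivative pr f x y) (at y)"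
proof -
  have "((\<lambda>s. (x, s)) has_derivative (\<lambda>h. (0, h))) (at y)"
    by (auto intro!: derivative_eq_intros)
  then have "(case_prod f \<circ> (\<lambda>s. (x, s))) differentiable (at y)"
    using differentiable_chain_at assms differentiableI by blast
  then show ?thesis
    by (simp add: o_def pr_def DERIV_deriv_iff_real_differentiable)
qed

lemma Ck_2_D:
  assumes "Ck 2 S u" and "z \<in> S"
  shows "case_prod u differentiable (at z)" "case_prod (pt u) differentiable (at z)"
    "case_prod (pr u) differentiable (at z)"
    "continuous_on S (case_prod (pr (pt u)))" "continuous_on S (case_prod (pt (pr u)))"
  using assms by (simp_all add: numeral_2_eq_2)

lemma smooth_on_Ck: "smooth_on S u \<Longrightarrow> Ck k S u"
  by (simp add: smooth_on_def)

lemma smooth_on_pt: "smooth_on S u \<Longrightarrow> smooth_on S (pt u)"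
  and smooth_on_pr: "smooth_on S u \<Longrightarrow> smooth_on S (pr u)"
  unfolding smooth_on_def by (metis Ck.simps(2))+

text \<open>Mean value theorem for the mixed second difference on a rectangle: applying
  the one-variable mean value theorem first in \<open>x\<close> and then in \<open>y\<close> expresses the
  second difference through one value of the mixed partial \<open>fxy\<close>.\<close>

lemma second_difference_mean_value:
  fixes f fx fxy :: "real \<Rightarrow> real \<Rightarrow> real"
  assumes h: "h > 0" and k: "k > 0"
    and fx: "\<And>x y. x \<in> {a..a+h} \<Longrightarrow> y \<in> {c..c+k} \<Longrightarrow> ((\<lambda>x. f x y) has_real_derivative fx x y) (at x)"
    and fxy: "\<And>x y. x \<in> {a..a+h} \<Longrightarrow> y \<in> {c..c+k} \<Longrightarrow> ((\<lambda>y. fx x y) has_real_derivative fxy x y) (at y)"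
  shows "\<exists>x y. x \<in> {a<..<a+h} \<and> y \<in> {c<..<c+k}
           \<and> f (a+h) (c+k) - f (a+h) c - f a (c+k) + f a c = h * k * fxy x y"
proof -
  have "\<And>x. a \<le> x \<Longrightarrow> x \<le> a+h \<Longrightarrow>
      ((\<lambda>x. f x (c+k) - f x c) has_real_derivative fx x (c+k) - fx x c) (at x)"
    using k by (intro DERIV_diff fx) auto
  then obtain x where x: "a < x" "x < a+h"
    and "f (a+h) (c+k) - f (a+h) c - (f a (c+k) - f a c) = h * (fx x (c+k) - fx x c)"
    using MVT2[of a "a+h"] h by fastforce
  moreover obtain y where "c < y" "y < c+k" and "fx x (c+k) - fx x c = k * fxy x y"
    using MVT2[of c "c+k" "fx x" "fxy x"] k x fxy by fastforce
  ultimately show ?thesis by (intro exI[of _ x] exI[of _ y]) (auto simp: algebra_simps)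
qed

lemma dist_lt_of_box:
  fixes x y t r :: real
  assumes "\<bar>x - t\<bar> < d / 2" and "\<bar>y - r\<bar> < d / 2"
  shows "dist (x, y) (t, r) < d"
  using sqrt_sum_squares_le_sum_abs[of "x - t" "y - r"] assms
  by (simp add: dist_Pair_Pair dist_real_def)

text \<open>The second difference on a small square equals \<open>h\<^sup>2\<close> times a value of either mixed
  partial near the corner; letting the square shrink and using continuity forces
  the two values at the corner to coincide.\<close>

lemma mixed_partials_commute:
  assumes S: "open S" and u: "Ck 2 S u" and z: "(t, r) \<in> S"
  shows "pr (pt u) t r = pt (pr u) t r"
proof -
  define A where "A = pr (pt u) t r"
  define B where "B = pt (pr u) t r"
  have contA: "isCont (case_prod (pr (pt u))) (t, r)" and contB: "isCont (case_prod (pt (pr u))) (t, r)"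
    using Ck_2_D(4,5)[OF u z] S z by (simp_all add: continuous_on_eq_continuous_at)
  have "\<bar>A - B\<bar> < 2 * e" if e: "e > 0" for e
  proof -
    obtain d0 where d0: "d0 > 0" "ball (t, r) d0 \<subseteq> S"
      using S z open_contains_ball by blast
    obtain d1 where d1: "d1 > 0" "\<And>w. dist w (t, r) < d1 \<Longrightarrow> dist (case_prod (pr (pt u)) w) A < e"
      using contA e unfolding continuous_at_eps_delta A_def by fastforce
    obtain d2 where d2: "d2 > 0" "\<And>w. dist w (t, r) < d2 \<Longrightarrow> dist (case_prod (pt (pr u)) w) B < e"
      using contB e unfolding continuous_at_eps_delta B_def by fastforce
    define d where "d = min d0 (min d1 d2)"
    define h where "h = d / 3"
    have h: "h > 0" using d0 d1 d2 by (simp add: h_def d_def)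
    have near: "dist (x, y) (t, r) < d" if "x \<in> {t..t+h}" "y \<in> {r..r+h}" for x y
      using that h by (intro dist_lt_of_box) (auto simp: h_def)
    have inS: "(x, y) \<in> S" if "x \<in> {t..t+h}" "y \<in> {r..r+h}" for x y
      using near[OF that] d0(2) by (auto simp: d_def dist_commute)
    obtain x1 y1 where xy1: "x1 \<in> {t<..<t+h}" "y1 \<in> {r<..<r+h}"
      and D1: "u (t+h) (r+h) - u (t+h) r - u t (r+h) + u t r = h * h * pr (pt u) x1 y1"
      using second_difference_mean_value[OF h h, of t r u "pt u" "pr (pt u)"]
        pt_has_real_derivative[OF Ck_2_D(1)[OF u inS]]
        pr_has_real_derivative[OF Ck_2_D(2)[OF u inS]] by blast
    obtain y2 x2 where xy2: "y2 \<in> {r<..<r+h}" "x2 \<in> {t<..<t+h}"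
      and D2: "u (t+h) (r+h) - u t (r+h) - u (t+h) r + u t r = h * h * pt (pr u) x2 y2"
      using second_difference_mean_value[OF h h, of r t "\<lambda>y x. u x y" "\<lambda>y x. pr u x y" "\<lambda>y x. pt (pr u) x y"]
        pr_has_real_derivative[OF Ck_2_D(1)[OF u inS]]
        pt_has_real_derivative[OF Ck_2_D(3)[OF u inS]] by blast
    have same: "pr (pt u) x1 y1 = pt (pr u) x2 y2"
      using D1 D2 h by (simp add: algebra_simps)
    have "dist (pr (pt u) x1 y1) A < e"
      using d1(2) near xy1 by (fastforce simp: d_def)
    moreover have "dist (pt (pr u) x2 y2) B < e"
      using d2(2) near xy2 by (fastforce simp: d_def)
    ultimately show ?thesis using same by (simp add: dist_real_def)
  qed
  from this[of "\<bar>A - B\<bar> / 2"] show ?thesis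
    unfolding A_def B_def by fastforce
qed

text \<open>By symmetry of mixed
  partials only the three second derivatives \<open>u\<^sub>r\<^sub>r\<close>, \<open>u\<^sub>r\<^sub>t\<close>, \<open>u\<^sub>t\<^sub>t\<close> occur, which is what
  the total derivatives \<open>D\<^sub>t\<close>, \<open>D\<^sub>r\<close> below require.\<close>

lemma smooth_jet_derivatives:
  assumes u: "smooth_on (UNIV \<times> {0<..}) u" and r: "r > 0"
  shows "((\<lambda>s. u t s) has_real_derivative pr u t r) (at r)"
    and "((\<lambda>s. pr u t s) has_real_derivative pr (pr u) t r) (at r)"
    and "((\<lambda>s. pt u t s) has_real_derivative pr (pt u) t r) (at r)"
    and "((\<lambda>s. u s r) has_real_derivative pt u t r) (at t)"
    and "((\<lambda>s. pr u s r) has_real_derivative pr (pt u) t r) (at t)"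
    and "((\<lambda>s. pt u s r) has_real_derivative pt (pt u) t r) (at t)"
proof -
  have z: "(t, r) \<in> UNIV \<times> {0<..}" using r by simp
  have open_half: "open (UNIV \<times> {0::real<..})" by (intro open_Times) auto
  note Ck2 = smooth_on_Ck[OF u, of 2]
  have diff: "case_prod v differentiable (at (t, r))" if "smooth_on (UNIV \<times> {0<..}) v" for v
    using Ck_2_D(1)[OF smooth_on_Ck[OF that] z] .
  show "((\<lambda>s. u t s) has_real_derivative pr u t r) (at r)"
    "((\<lambda>s. pr u t s) has_real_derivative pr (pr u) t r) (at r)"
    "((\<lambda>s. pt u t s) has_real_derivative pr (pt u) t r) (at r)"
    by (intro pr_has_real_derivative diff smooth_on_pr smooth_on_pt u)+
  show "((\<lambda>s. u s r) has_real_derivative pt u t r) (at t)"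
    "((\<lambda>s. pt u s r) has_real_derivative pt (pt u) t r) (at t)"
    by (intro pt_has_real_derivative diff smooth_on_pt u)+
  show "((\<lambda>s. pr u s r) has_real_derivative pr (pt u) t r) (at t)"
    using pt_has_real_derivative[OF diff[OF smooth_on_pr[OF u]]]
      mixed_partials_commute[OF open_half Ck2 z] by simp
qed

text \<open>The three partial derivatives of the Lagrangian \<open>r\<^sup>n\<^sup>-\<^sup>1 L\<close> with respect to
  \<open>u\<close>, \<open>u\<^sub>r\<close> and \<open>u\<^sub>t\<close> (the \<open>u\<close>-derivative needs \<open>u > 0\<close> because of the power \<open>u\<^sup>p\<close>).\<close>

lemma Lag_dU:
  assumes "V > 0"
  shows "((\<lambda>V. Lag b c p lam n r V W Z) has_real_derivative
     r powr (n - 1) * (- lam / 2 * Z^2 + lam / 2 * (c + b * V powr p) * W^2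
        - (r * W - 3 * lam * V) * (b * p * V powr p / V) * W^2 / 6)) (at V)"
  unfolding Lag_def using assms
  by (auto intro!: derivative_eq_intros) (simp add: field_simps power2_eq_square powr_diff[of V])

lemma Lag_dW:
  "((\<lambda>W. Lag b c p lam n r V W Z) has_real_derivative
     r powr (n - 1) * (r * Z^2 / 2 - r * (c + b * V powr p) * W^2 / 2
        + lam * V * (c + b * V powr p) * W)) (at W)"
  unfolding Lag_def
  by (auto intro!: derivative_eq_intros) (simp add: field_simps power2_eq_square)

lemma Lag_dZ:
  "((\<lambda>Z. Lag b c p lam n r V W Z) has_real_derivative r powr (n - 1) * (r * W - lam * V) * Z) (at Z)"
  unfolding Lag_def
  by (auto intro!: derivative_eq_intros simp: algebra_simps)

lemma EL_Lag_along:
  fixes u :: "real \<Rightarrow> real \<Rightarrow> real" and t r b c p lam n :: real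
  defines "U \<equiv> u t r" and "Ur \<equiv> pr u t r" and "Ut \<equiv> pt u t r"
    and "Urr \<equiv> pr (pr u) t r" and "Urt \<equiv> pr (pt u) t r" and "Utt \<equiv> pt (pt u) t r"
    and "R \<equiv> r powr (n - 1)" and "F \<equiv> c + b * u t r powr p" and "F' \<equiv> b * p * u t r powr p / u t r"
  assumes u: "smooth_on (UNIV \<times> {0<..}) u" and r: "r > 0" and U: "U > 0"
  shows "EL (Lag b c p lam n) u t r =
      R * (- lam / 2 * Ut^2 + lam / 2 * F * Ur^2 - (r * Ur - 3 * lam * U) * F' * Ur^2 / 6)
    - ((n - 1) * R / r * (r * Ut^2 / 2 - r * F * Ur^2 / 2 + lam * U * F * Ur)
       + R * (Ut^2 / 2 + r * Ut * Urt - F * Ur^2 / 2 - r * F' * Ur^3 / 2 - r * F * Ur * Urr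
              + lam * F * Ur^2 + lam * U * F' * Ur^2 + lam * U * F * Urr))
    - R * ((r * Urt - lam * Ut) * Ut + (r * Ur - lam * U) * Utt)"
proof -
  note jet = smooth_jet_derivatives[OF u r]
  have dU: "deriv (\<lambda>V. Lag b c p lam n r V Ur Ut) U
      = R * (- lam / 2 * Ut^2 + lam / 2 * F * Ur^2 - (r * Ur - 3 * lam * U) * F' * Ur^2 / 6)"
    unfolding R_def F_def F'_def U_def using U
    by (intro DERIV_imp_deriv Lag_dU) (simp add: U_def)
  have "(\<lambda>s. deriv (\<lambda>W. Lag b c p lam n s (u t s) W (pt u t s)) (pr u t s))
      = (\<lambda>s. s powr (n - 1) * (s * (pt u t s)^2 / 2 - s * (c + b * u t s powr p) * (pr u t s)^2 / 2
              + lam * u t s * (c + b * u t s powr p) * pr u t s))"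
    by (intro ext DERIV_imp_deriv Lag_dW)
  moreover have "((\<lambda>s. s powr (n - 1) * (s * (pt u t s)^2 / 2 - s * (c + b * u t s powr p) * (pr u t s)^2 / 2
              + lam * u t s * (c + b * u t s powr p) * pr u t s)) has_real_derivative
      (n - 1) * R / r * (r * Ut^2 / 2 - r * F * Ur^2 / 2 + lam * U * F * Ur)
       + R * (Ut^2 / 2 + r * Ut * Urt - F * Ur^2 / 2 - r * F' * Ur^3 / 2 - r * F * Ur * Urr
              + lam * F * Ur^2 + lam * U * F' * Ur^2 + lam * U * F * Urr)) (at r)"
    unfolding U_def Ur_def Ut_def Urr_def Urt_def R_def F_def F'_def using r U
    by (auto intro!: derivative_eq_intros jet simp: U_def)
       (simp add: field_simps power2_eq_square power3_eq_cube powr_diff)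
  ultimately have dW: "deriv (\<lambda>s. deriv (\<lambda>W. Lag b c p lam n s (u t s) W (pt u t s)) (pr u t s)) r
      = (n - 1) * R / r * (r * Ut^2 / 2 - r * F * Ur^2 / 2 + lam * U * F * Ur)
       + R * (Ut^2 / 2 + r * Ut * Urt - F * Ur^2 / 2 - r * F' * Ur^3 / 2 - r * F * Ur * Urr
              + lam * F * Ur^2 + lam * U * F' * Ur^2 + lam * U * F * Urr)"
    by (simp add: DERIV_imp_deriv)
  have "(\<lambda>s. deriv (\<lambda>Z. Lag b c p lam n r (u s r) (pr u s r) Z) (pt u s r))
      = (\<lambda>s. r powr (n - 1) * (r * pr u s r - lam * u s r) * pt u s r)"
    by (intro ext DERIV_imp_deriv Lag_dZ)
  moreover have "((\<lambda>s. r powr (n - 1) * (r * pr u s r - lam * u s r) * pt u s r) has_real_derivative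
      R * ((r * Urt - lam * Ut) * Ut + (r * Ur - lam * U) * Utt)) (at t)"
    unfolding U_def Ur_def Ut_def Urt_def Utt_def R_def
    by (auto intro!: derivative_eq_intros jet simp: algebra_simps)
  ultimately have dZ: "deriv (\<lambda>s. deriv (\<lambda>Z. Lag b c p lam n r (u s r) (pr u s r) Z) (pt u s r)) t
      = R * ((r * Urt - lam * Ut) * Ut + (r * Ur - lam * U) * Utt)"
    by (simp add: DERIV_imp_deriv)
  show ?thesis
    unfolding EL_def dW dZ using dU by (simp add: U_def Ur_def Ut_def)
qed

text \<open>It
  holds under the constraints \<open>c \<lambda> = 0\<close> and \<open>(1 + p/3) \<lambda> = 2 - n\<close>: eliminating \<open>n\<close>,
  the remaining terms cancel in each of the cases \<open>c = 0\<close> and \<open>\<lambda> = 0\<close>.\<close>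

lemma multiplier_identity_algebra:
  fixes R r U Ur Ut Urr Urt Utt P b c p lam n :: real
  defines "F \<equiv> c + b * P" and "F' \<equiv> b * p * P / U"
  assumes r: "r > 0" and U: "U > 0" and c_lam: "c * lam = 0" and lam_n: "(1 + p / 3) * lam = 2 - n"
  shows "R * (r * Ur - lam * U) * (Utt - F * (Urr + (n - 1) / r * Ur) - p * b / 3 * (P / U) * Ur^2)
    = - (R * (- lam / 2 * Ut^2 + lam / 2 * F * Ur^2 - (r * Ur - 3 * lam * U) * F' * Ur^2 / 6)
        - ((n - 1) * R / r * (r * Ut^2 / 2 - r * F * Ur^2 / 2 + lam * U * F * Ur)
           + R * (Ut^2 / 2 + r * Ut * Urt - F * Ur^2 / 2 - r * F' * Ur^3 / 2 - r * F * Ur * Urr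
                  + lam * F * Ur^2 + lam * U * F' * Ur^2 + lam * U * F * Urr))
        - R * ((r * Urt - lam * Ut) * Ut + (r * Ur - lam * U) * Utt))
      - (r * ((n - 1) * R / r * Ut^2 + R * (2 * Ut * Urt)) + (1 - (n + lam) / 2) * (R * Ut^2))"
proof -
  have n: "n = 2 - (1 + p / 3) * lam" using lam_n by simp
  from c_lam have "c = 0 \<or> lam = 0" by simp
  then show ?thesis using r U unfolding F_def F'_def n
    by (elim disjE; simp add: field_simps; simp add: algebra_simps power2_eq_square power3_eq_cube)
qed

lemma multiplier_identity:
  fixes u :: "real \<Rightarrow> real \<Rightarrow> real" and t r b c p lam n :: real
  assumes c_lam: "c * lam = 0" and lam_n: "(1 + p / 3) * lam = 2 - n"
    and u: "smooth_on (UNIV \<times> {0<..}) u" and r: "r > 0" and U: "u t r > 0"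
  shows "r powr (n - 1) * (r * pr u t r - lam * u t r) * resA b c p n u t r
      = - EL (Lag b c p lam n) u t r
        - (r * deriv (\<lambda>s. s powr (n - 1) * (pt u t s)^2) r
           + (1 - (n + lam) / 2) * (r powr (n - 1) * (pt u t r)^2))"
proof -
  note jet = smooth_jet_derivatives[OF u r]
  have "((\<lambda>s. s powr (n - 1) * (pt u t s)^2) has_real_derivative
      (n - 1) * r powr (n - 1) / r * (pt u t r)^2 + r powr (n - 1) * (2 * pt u t r * pr (pt u) t r)) (at r)"
    using r by (auto intro!: derivative_eq_intros jet) (simp add: field_simps powr_diff power2_eq_square)
  then have flux: "deriv (\<lambda>s. s powr (n - 1) * (pt u t s)^2) r
      = (n - 1) * r powr (n - 1) / r * (pt u t r)^2 + r powr (n - 1) * (2 * pt u t r * pr (pt u) t r)"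
    by (rule DERIV_imp_deriv)
  have "u t r powr (p - 1) = u t r powr p / u t r"
    using U by (simp add: powr_diff)
  then show ?thesis
    unfolding resA_def EL_Lag_along[OF u r U] flux
    using multiplier_identity_algebra[OF r U c_lam lam_n] by (simp add: mult.assoc)
qed

definition cl_density :: "real \<Rightarrow> real \<Rightarrow> real \<Rightarrow> real \<Rightarrow> real \<Rightarrow> real \<Rightarrow> real \<Rightarrow> real" where
  "cl_density b p n r U W Z =
     r powr (n - 1) * ((r * W + n / 3 * U) * Z^2 / 2 + b * U powr p * (r * W^3 / 6 + n / 3 * U * W^2 / 2))"

definition cl_flux :: "real \<Rightarrow> real \<Rightarrow> real \<Rightarrow> real \<Rightarrow> real \<Rightarrow> real \<Rightarrow> real \<Rightarrow> real" where
  "cl_flux b p n r U W Z =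
     - (r powr (n - 1) * (b * U powr p * Z * (r * W^2 / 2 + n / 3 * U * W) + r * Z^3 / 6))"

lemma conservation_law:
  fixes u :: "real \<Rightarrow> real \<Rightarrow> real" and t r b p n :: real
  defines "U \<equiv> u t r" and "Ur \<equiv> pr u t r" and "Ut \<equiv> pt u t r"
    and "Urr \<equiv> pr (pr u) t r" and "Urt \<equiv> pr (pt u) t r" and "Utt \<equiv> pt (pt u) t r"
    and "R \<equiv> r powr (n - 1)" and "P \<equiv> u t r powr p"
  assumes n: "n \<noteq> 0" and p: "p = 6 * (1 - 3 / n)"
    and u: "smooth_on (UNIV \<times> {0<..}) u" and r: "r > 0" and U: "U > 0"
  shows "\<exists>DT DX. ((\<lambda>s. cl_density b p n r (u s r) (pr u s r) (pt u s r)) has_real_derivative DT) (at t)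
           \<and> ((\<lambda>s. cl_flux b p n s (u t s) (pr u t s) (pt u t s)) has_real_derivative DX) (at r)
           \<and> DT + DX = R * Ut * (r * Ur + n / 3 * U) * resA b 0 p n u t r"
proof (intro exI conjI)
  note jet = smooth_jet_derivatives[OF u r]
  show "((\<lambda>s. cl_density b p n r (u s r) (pr u s r) (pt u s r)) has_real_derivative
      R * ((r * Urt + n / 3 * Ut) * Ut^2 / 2 + (r * Ur + n / 3 * U) * Ut * Utt
           + b * p * P / U * Ut * (r * Ur^3 / 6 + n / 3 * U * Ur^2 / 2)
           + b * P * (r * Ur^2 * Urt / 2 + n / 3 * (Ut * Ur^2 + 2 * U * Ur * Urt) / 2))) (at t)"
    unfolding cl_density_def U_def Ur_def Ut_def Urt_def Utt_def R_def P_def using U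
    by (auto intro!: derivative_eq_intros jet simp: U_def)
       (simp add: field_simps power2_eq_square power3_eq_cube powr_diff[of "u t r"])
  show "((\<lambda>s. cl_flux b p n s (u t s) (pr u t s) (pt u t s)) has_real_derivative
      - ((n - 1) * R / r * (b * P * Ut * (r * Ur^2 / 2 + n / 3 * U * Ur) + r * Ut^3 / 6)
         + R * (b * p * P / U * Ur * Ut * (r * Ur^2 / 2 + n / 3 * U * Ur)
                + b * P * Urt * (r * Ur^2 / 2 + n / 3 * U * Ur)
                + b * P * Ut * (Ur^2 / 2 + r * Ur * Urr + n / 3 * (Ur^2 + U * Urr))
                + Ut^3 / 6 + r * Ut^2 * Urt / 2))) (at r)"
    unfolding cl_flux_def U_def Ur_def Ut_def Urr_def Urt_def R_def P_def using U r
    by (auto intro!: derivative_eq_intros jet simp: U_def)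
       (simp add: field_simps power2_eq_square power3_eq_cube powr_diff)
  have "U powr (p - 1) = P / U"
    using U by (simp add: P_def U_def powr_diff)
  then have res: "resA b 0 p n u t r = Utt - b * P * (Urr + (n - 1) / r * Ur) - p * b / 3 * (P / U) * Ur^2"
    by (simp add: resA_def U_def Ur_def Urr_def Utt_def P_def)
  show "R * ((r * Urt + n / 3 * Ut) * Ut^2 / 2 + (r * Ur + n / 3 * U) * Ut * Utt
           + b * p * P / U * Ut * (r * Ur^3 / 6 + n / 3 * U * Ur^2 / 2)
           + b * P * (r * Ur^2 * Urt / 2 + n / 3 * (Ut * Ur^2 + 2 * U * Ur * Urt) / 2))
      + - ((n - 1) * R / r * (b * P * Ut * (r * Ur^2 / 2 + n / 3 * U * Ur) + r * Ut^3 / 6)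
         + R * (b * p * P / U * Ur * Ut * (r * Ur^2 / 2 + n / 3 * U * Ur)
                + b * P * Urt * (r * Ur^2 / 2 + n / 3 * U * Ur)
                + b * P * Ut * (Ur^2 / 2 + r * Ur * Urr + n / 3 * (Ur^2 + U * Urr))
                + Ut^3 / 6 + r * Ut^2 * Urt / 2))
      = R * Ut * (r * Ur + n / 3 * U) * resA b 0 p n u t r"
    unfolding res using n r U unfolding p
    by (simp add: field_simps) (simp add: algebra_simps power2_eq_square power3_eq_cube)
qed

text \<open>With \<open>\<lambda> = -n/3\<close> the constraint \<open>(1 + p/3) \<lambda> = 2 - n\<close> rules out
  \<open>n = 0\<close>, and the conservation law is given by the density and flux above.\<close>

theorem mainTheorem9:
  fixes a b c p lam n :: real
  assumes "3 * a = p * b" and "c * lam = 0" and "(1 + p / 3) * lam = 2 - n"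
  shows "(\<forall>u. smooth_on (UNIV \<times> {0<..}) u \<and> (\<forall>t r. r > 0 \<longrightarrow> u t r > 0) \<longrightarrow>
           (\<forall>t r. r > 0 \<longrightarrow>
              r powr (n - 1) * (r * pr u t r - lam * u t r) * resA b c p n u t r
              = - EL (Lag b c p lam n) u t r
                - (r * deriv (\<lambda>s. s powr (n - 1) * (pt u t s)^2) r
                   + (1 - (n + lam) / 2) * (r powr (n - 1) * (pt u t r)^2))))
       \<and> (c = 0 \<and> p = 6 * (1 - 3 / n) \<and> lam = - n / 3 \<longrightarrow>
           (\<exists>T X :: real \<Rightarrow> real \<Rightarrow> real \<Rightarrow> real \<Rightarrow> real \<Rightarrow> real.
              \<forall>u. smooth_on (UNIV \<times> {0<..}) u \<and> (\<forall>t r. r > 0 \<longrightarrow> u t r > 0) \<longrightarrow>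
                (\<forall>t r. r > 0 \<longrightarrow>
                   (\<exists>DT DX.
                      ((\<lambda>s. T s r (u s r) (pr u s r) (pt u s r)) has_real_derivative DT) (at t)
                    \<and> ((\<lambda>s. X t s (u t s) (pr u t s) (pt u t s)) has_real_derivative DX) (at r)
                    \<and> DT + DX = r powr (n - 1) * pt u t r * (r * pr u t r + n / 3 * u t r)
                                * resA b c p n u t r))))"
proof -
  have n_nonzero: "lam = - n / 3 \<longrightarrow> n \<noteq> 0"
    using assms(3) by auto
  show ?thesis
    using multiplier_identity[OF assms(2,3)] conservation_law[of n p] n_nonzero
    by (intro conjI impI exI[of _ "\<lambda>_. cl_density b p n"] exI[of _ "\<lambda>_. cl_flux b p n"])
       auto
qed

end
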